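(* Let $\theta_1,\theta_2\in(0,\pi/2)$ satisfy $\theta_1\cot\theta_1=\pi\cot\theta_2$. Then $$\frac{2\theta_1}{\sin\theta_1}+2\cos\theta_1-\pi>\frac{2\pi}{\sin\theta_2}-2\pi.$$ *)

theory Defs
  imports Complex_Main
begin

end

theory Submission
  imports Defs "HOL-Analysis.Complex_Transcendental"
begin

(* Write t = theta1, so that cot theta2 = t cot t / pi.  Since
   cot^2 x = (1/sin x)^2 - 1, the identity (1/sin x - 1)^2 >= 0 gives
   2/sin x - 2 <= cot^2 x, so the right-hand side is at most
   pi cot^2 theta2 = (t cot t)^2 / pi.  It therefore suffices to show the
   one-variable inequality

       (t cot t)^2 / pi < 2t/sin t + 2 cos t - pi      for 0 < t < pi/2.

   This is done by elementary Taylor estimates, separately on two ranges: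
   for 0 < t <= 1 we use t/sin t >= 1 + t^2/6, cos t >= 1 - t^2/2 and
   t cot t <= 1 - t^2/3; for 1 <= t < pi/2 we substitute e = pi/2 - t
   (so 0 < e <= 0.571), clear denominators, and bound cos e, sin e and
   sin 2e by their Taylor polynomials.  In both cases what remains is a
   polynomial inequality in t (resp. e) and pi that follows from the
   bounds 3.14 <= pi <= 3.1416. *)

lemma sin_le_taylor7:
  fixes x :: real
  assumes "0 \<le> x"
  shows "sin x \<le> x - x^3/6 + x^5/120 + x^7/5040"
proof -
  have "\<bar>sin x - (\<Sum>m<7. sin_coeff m * x ^ m)\<bar> \<le> inverse (fact 7) * \<bar>x\<bar> ^ 7"
    by (rule Maclaurin_sin_bound)
  moreover have "(\<Sum>m<7. sin_coeff m * x ^ m) = x - x^3/6 + x^5/120"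
    by (simp add: lessThan_nat_numeral sin_coeff_def fact_numeral)
  ultimately have "\<bar>sin x - (x - x^3/6 + x^5/120)\<bar> \<le> x^7/5040"
    using assms by (simp add: fact_numeral)
  then show ?thesis
    unfolding abs_le_iff by linarith
qed

lemma sin_ge_taylor5:
  fixes x :: real
  assumes "0 \<le> x"
  shows "x - x^3/6 - x^5/120 \<le> sin x"
proof -
  have "\<bar>sin x - (\<Sum>m<5. sin_coeff m * x ^ m)\<bar> \<le> inverse (fact 5) * \<bar>x\<bar> ^ 5"
    by (rule Maclaurin_sin_bound)
  moreover have "(\<Sum>m<5. sin_coeff m * x ^ m) = x - x^3/6"
    by (simp add: lessThan_nat_numeral sin_coeff_def fact_numeral)
  ultimately have "\<bar>sin x - (x - x^3/6)\<bar> \<le> x^5/120"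
    using assms by (simp add: fact_numeral)
  then show ?thesis
    unfolding abs_le_iff by linarith
qed

lemma cos_taylor6:
  fixes x :: real
  shows "\<bar>cos x - (1 - x^2/2 + x^4/24)\<bar> \<le> x^6/720"
proof -
  obtain u where u: "cos x = (\<Sum>m<6. cos_coeff m * x ^ m) + cos (u + 1/2 * real 6 * pi) / fact 6 * x ^ 6"
    using Maclaurin_cos_expansion by blast
  have "(\<Sum>m<6. cos_coeff m * x ^ m) = 1 - x^2/2 + x^4/24"
    by (simp add: lessThan_nat_numeral cos_coeff_def fact_numeral)
  moreover have "\<bar>cos (u + 1/2 * real 6 * pi)\<bar> * x^6 \<le> 1 * x^6"
    by (rule mult_right_mono) (auto simp: abs_cos_le_one)
  ultimately show ?thesis
    using u by (simp add: fact_numeral abs_mult)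
qed

text \<open>The second-order lower bound holds globally, via
  cos x = 1 - 2 sin^2 (x/2) and |sin y| <= |y|.\<close>

lemma cos_ge_one_minus_half_square:
  fixes x :: real
  shows "1 - x^2/2 \<le> cos x"
proof -
  have "\<bar>sin (x/2)\<bar> \<le> \<bar>x/2\<bar>"
    by (rule abs_sin_x_le_abs_x)
  then have "sin (x/2) ^ 2 \<le> (x/2) ^ 2"
    by (metis power2_abs power_mono abs_ge_zero)
  moreover have "cos x = 1 - 2 * sin (x/2) ^ 2"
    using cos_double_sin[of "x/2"] by simp
  ultimately show ?thesis
    by (simp add: power_divide)
qed

lemma pi_bounds: "157/50 \<le> pi" "pi \<le> 3927/1250"
  using pi_approx by auto

section \<open>The one-variable inequality for small angles\<close>

lemma inverse_sinc_lower:
  fixes t :: real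
  assumes "0 < t" "t \<le> 1"
  shows "1 + t^2/6 \<le> t / sin t"
proof -
  have "t^7 \<le> t^5" "t^9 \<le> t^5" "0 \<le> t^5"
    using assms by (auto intro: power_decreasing)
  have "sin t * (1 + t^2/6) \<le> (t - t^3/6 + t^5/120 + t^7/5040) * (1 + t^2/6)"
    using sin_le_taylor7[of t] assms by (intro mult_right_mono) auto
  also have "\<dots> = t - 7/360*t^5 + t^7/630 + t^9/30240"
    by (simp add: field_simps eval_nat_numeral)
  also have "\<dots> \<le> t"
    using \<open>t^7 \<le> t^5\<close> \<open>t^9 \<le> t^5\<close> \<open>0 \<le> t^5\<close> by linarith
  finally have "sin t * (1 + t^2/6) \<le> t" .
  moreover have "0 < sin t"
    using assms pi_bounds by (intro sin_gt_zero) auto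
  ultimately show ?thesis
    by (simp add: pos_le_divide_eq mult.commute)
qed

lemma x_cot_upper:
  fixes t :: real
  assumes "0 < t" "t \<le> 1"
  shows "t * cot t \<le> 1 - t^2/3"
proof -
  have "t * cos t \<le> t * (1 - t^2/2 + t^4/24 + t^6/720)"
    using cos_taylor6[of t] assms unfolding abs_le_iff by (intro mult_left_mono) auto
  also have "\<dots> = (t - t^3/6 - t^5/120) * (1 - t^2/3) - (t^5/180 + t^7/720)"
    by (simp add: field_simps eval_nat_numeral)
  also have "\<dots> \<le> (t - t^3/6 - t^5/120) * (1 - t^2/3)"
    using assms by (simp only: diff_le_eq le_add_same_cancel1) simp
  also have "\<dots> \<le> sin t * (1 - t^2/3)"
    using sin_ge_taylor5[of t] assms power_le_one[of t 2] by (intro mult_right_mono) auto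
  finally have "t * cos t \<le> sin t * (1 - t^2/3)" .
  moreover have "0 < sin t"
    using assms pi_bounds by (intro sin_gt_zero) auto
  ultimately show ?thesis
    by (simp add: cot_def pos_divide_le_eq mult.commute)
qed

text \<open>The polynomial inequality behind the small-angle case, with
  x standing for t^2 and p for pi.\<close>

lemma small_angle_polynomial:
  fixes p x :: real
  assumes "0 < x" "x \<le> 1" "157/50 \<le> p" "p \<le> 3927/1250"
  shows "(1 - x/3)^2 < p * (4 - 2*x/3 - p)"
proof -
  have "p*p \<le> (3927/1250)*(3927/1250)"
    using assms by (intro mult_mono) auto
  moreover have "p*x \<le> (3927/1250)*x" "x*x \<le> 1*x"
    using assms by (auto intro: mult_right_mono)
  moreover have "p * (4 - 2*x/3 - p) - (1 - x/3)^2 = 4*p - 2/3*(p*x) - p*p - 1 + 2/3*x - (x*x)/9"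
    by (simp add: algebra_simps power2_eq_square)
  ultimately show ?thesis
    using assms by linarith
qed

text \<open>The one-variable inequality for 0 < t <= 1: bound t cot t from
  above and 2t/sin t + 2 cos t from below by polynomials in t^2.\<close>

lemma key_inequality_small_angle:
  fixes t :: real
  assumes "0 < t" "t \<le> 1"
  shows "(t * cot t)^2 / pi < 2*t/sin t + 2*cos t - pi"
proof -
  have "0 \<le> t * cot t"
    using assms pi_bounds cot_gt_zero[of t] by simp
  then have "(t * cot t)^2 \<le> (1 - t^2/3)^2"
    using x_cot_upper[OF assms] by (intro power_mono) auto
  then have "(t * cot t)^2 / pi \<le> (1 - t^2/3)^2 / pi"
    by (simp add: divide_right_mono)
  also have "\<dots> < 4 - 2*t^2/3 - pi"
    using small_angle_polynomial[of "t^2" pi] assms pi_bounds power_le_one[of t 2]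
    by (simp add: pos_divide_less_eq mult.commute)
  also have "\<dots> \<le> 2*t/sin t + 2*cos t - pi"
    using inverse_sinc_lower[OF assms] cos_ge_one_minus_half_square[of t] by simp
  finally show ?thesis .
qed

section \<open>The one-variable inequality for angles near pi/2\<close>

lemma one_minus_cos_lower:
  fixes e :: real
  shows "e^2/2 - e^4/24 - e^6/720 \<le> 1 - cos e"
  using cos_taylor6[of e] unfolding abs_le_iff by linarith

lemma double_angle_sine_defect:
  fixes e :: real
  assumes "0 \<le> e"
  shows "2*e - 2 * sin e * cos e \<le> 4*e^3/3 + 4*e^5/15"
proof -
  have "2*e - (2*e)^3/6 - (2*e)^5/120 \<le> sin (2*e)"
    using sin_ge_taylor5[of "2*e"] assms by simp
  moreover have "(2*e)^3/6 + (2*e)^5/120 = 4*e^3/3 + 4*e^5/15"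
    by (simp add: field_simps eval_nat_numeral)
  ultimately show ?thesis
    using sin_double[of e] by linarith
qed

text \<open>The two combinations of these bounds that occur after clearing
  denominators in the large-angle case.\<close>

lemma versine_product_lower:
  fixes e :: real
  assumes "0 \<le> e" "e \<le> 1"
  shows "(1 - e^2/2) * (e^2/2 - e^4/24 - e^6/720) \<le> cos e * (1 - cos e)"
proof (rule mult_mono)
  have "e^6 \<le> e^4" "e^4 \<le> e^2"
    using assms by (auto intro: power_decreasing)
  then show "0 \<le> e^2/2 - e^4/24 - e^6/720"
    using zero_le_power2[of e] by linarith
  show "0 \<le> cos e"
    using assms pi_bounds by (intro cos_ge_zero) auto
qed (use cos_ge_one_minus_half_square one_minus_cos_lower in auto)

lemma double_angle_sine_defect_weighted:
  fixes e :: real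
  assumes "0 \<le> e" "e \<le> pi/2"
  shows "cos e * (2*e - 2 * sin e * cos e) \<le> 4*e^3/3 + 4*e^5/15"
proof -
  have "0 \<le> cos e"
    using assms by (intro cos_ge_zero) auto
  then have "cos e * (2*e - 2 * sin e * cos e) \<le> cos e * (4*e^3/3 + 4*e^5/15)"
    by (intro mult_left_mono double_angle_sine_defect assms(1))
  also have "\<dots> \<le> 1 * (4*e^3/3 + 4*e^5/15)"
    using assms by (intro mult_right_mono) auto
  finally show ?thesis
    by simp
qed

lemma large_angle_polynomial:
  fixes p e :: real
  assumes "0 < e" "e \<le> 571/1000" "157/50 \<le> p" "p \<le> 3927/1250"
  shows "0 < p^2/4 - p*e/3 - (7*p^2/24 + 1)*e^2 - 4*p*e^3/15
             + p^2*(1/48 - 1/720)*e^4 + p^2*e^6/1440"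
proof -
  have e2: "e^2 \<le> (571/1000)^2" and e3: "e^3 \<le> (571/1000)^3"
    using assms by (intro power_mono; simp)+
  have p2: "(157/50)^2 \<le> p^2" and p2u: "p^2 \<le> (3927/1250)^2"
    using assms by (intro power_mono; simp)+
  have "p*e \<le> (3927/1250)*(571/1000)"
    using assms by (intro mult_mono) auto
  moreover have "p^2*e^2 \<le> (3927/1250)^2*(571/1000)^2"
    using e2 p2u by (intro mult_mono) auto
  moreover have "p*e^3 \<le> (3927/1250)*(571/1000)^3"
    using assms e3 by (intro mult_mono) auto
  ultimately have "p*e \<le> 17939/10000" "p^2*e^2 \<le> 3218/1000" "p*e^3 \<le> 5849/10000"
      "e^2 \<le> 32605/100000" "98596/10000 \<le> p^2"
    using e2 p2 by (simp_all add: power_divide)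
  moreover have "0 \<le> p^2*e^4" "0 \<le> p^2*e^6"
    by auto
  moreover have "p^2/4 - p*e/3 - (7*p^2/24 + 1)*e^2 - 4*p*e^3/15
                   + p^2*(1/48 - 1/720)*e^4 + p^2*e^6/1440
     = p^2/4 - (p*e)/3 - 7/24*(p^2*e^2) - e^2 - 4/15*(p*e^3)
         + 7/360*(p^2*e^4) + (p^2*e^6)/1440"
    by (simp add: algebra_simps)
  ultimately show ?thesis
    by linarith
qed

text \<open>With e = pi/2 - t, so that sin t = cos e and cos t = sin e, the
  large-angle case after clearing the denominator pi cos^2 e: every
  trigonometric quantity is replaced by its Taylor bound, and the
  remaining polynomial is e^2 times the positive polynomial above.\<close>

lemma large_angle_cleared:
  fixes e t :: real
  assumes e: "0 < e" "e \<le> 571/1000" and t: "t = pi/2 - e"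
  shows "t^2 * sin e ^ 2 < pi * (2*t*cos e + 2 * sin e * cos e ^ 2 - pi * cos e ^ 2)"
proof -
  define C S where "C = cos e" and "S = sin e"
  define D where "D = e^2/2 - e^4/24 - e^6/720"
  define B where "B = 4*e^3/3 + 4*e^5/15"
  have "pi * (C * (2*e - 2*S*C)) \<le> pi * B"
    using double_angle_sine_defect_weighted[of e] e pi_bounds unfolding B_def C_def S_def
    by (intro mult_left_mono) auto
  moreover have "pi^2 * ((1 - e^2/2) * D) \<le> pi^2 * (C * (1 - C))"
    using versine_product_lower[of e] e unfolding C_def D_def
    by (intro mult_left_mono) auto
  moreover have "t^2 * S^2 \<le> t^2 * e^2"
    unfolding S_def using e pi_bounds
    by (intro mult_left_mono power_mono) (auto intro: sin_ge_zero sin_x_le_x)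
  ultimately have bounds:
    "pi^2 * ((1 - e^2/2) * D) - pi * B - t^2 * e^2
       \<le> pi^2 * (C * (1 - C)) - pi * (C * (2*e - 2*S*C)) - t^2 * S^2"
    by linarith
  define H where "H = pi^2/4 - pi*e/3 - (7*pi^2/24 + 1)*e^2 - 4*pi*e^3/15
                        + pi^2*(1/48 - 1/720)*e^4 + pi^2*e^6/1440"
  have "0 < e^2 * H"
    unfolding H_def using large_angle_polynomial[of e pi] e pi_bounds by simp
  also have "e^2 * H = pi^2 * ((1 - e^2/2) * D) - pi * B - t^2 * e^2"
    unfolding t H_def D_def B_def by (simp add: field_simps eval_nat_numeral)
  also note bounds
  also have "pi^2 * (C * (1 - C)) - pi * (C * (2*e - 2*S*C)) - t^2 * S^2
      = pi * (2*t*C + 2*S*C^2 - pi*C^2) - t^2 * S^2"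
    unfolding t by (simp add: algebra_simps power2_eq_square)
  finally show ?thesis
    unfolding C_def S_def by simp
qed

lemma key_inequality_large_angle:
  fixes t :: real
  assumes "1 \<le> t" "t < pi/2"
  shows "(t * cot t)^2 / pi < 2*t/sin t + 2*cos t - pi"
proof -
  define e where "e = pi/2 - t"
  have e: "0 < e" "e \<le> 571/1000" and t: "t = pi/2 - e"
    unfolding e_def using assms pi_bounds by auto
  have sin_t: "sin t = cos e"
    unfolding t by (simp add: sin_cos_eq)
  have cos_t: "cos t = sin e"
    unfolding t by (simp add: cos_sin_eq)
  have "0 < cos e"
    using e pi_bounds by (intro cos_gt_zero_pi) auto
  then have pos: "0 < pi * cos e ^ 2"
    by simp
  have cleared: "(2*t/cos e + 2 * sin e - pi) * (pi * cos e ^ 2)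
      = pi * (2*t*cos e + 2 * sin e * cos e ^ 2 - pi * cos e ^ 2)"
    using pos by (simp add: field_simps power2_eq_square)
  have "(t * sin e)^2 < (2*t/cos e + 2 * sin e - pi) * (pi * cos e ^ 2)"
    using large_angle_cleared[OF e t] unfolding cleared power_mult_distrib .
  then have "(t * sin e)^2 / (pi * cos e ^ 2) < 2*t/cos e + 2 * sin e - pi"
    using pos by (simp add: pos_divide_less_eq)
  then show ?thesis
    unfolding cot_def sin_t cos_t by (simp add: power_divide power_mult_distrib mult.commute)
qed

text \<open>For every angle with nonzero sine, 2/sin x - 2 <= cot^2 x, since
  cot^2 x - (2/sin x - 2) = (1/sin x - 1)^2.\<close>

lemma two_csc_le_cot_square:
  fixes x :: real
  assumes "sin x \<noteq> 0"
  shows "2 / sin x - 2 \<le> cot x ^ 2"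
proof -
  have "cot x ^ 2 = 1 / sin x ^ 2 - 1"
    using assms by (simp add: cot_def power_divide cos_squared_eq field_simps)
  also have "\<dots> = (2 / sin x - 2) + (1 / sin x - 1) ^ 2"
    using assms by (simp add: field_simps power2_eq_square)
  finally show ?thesis
    by simp
qed

lemma key_inequality:
  fixes t :: real
  assumes "0 < t" "t < pi/2"
  shows "(t * cot t)^2 / pi < 2*t/sin t + 2*cos t - pi"
proof (cases "t \<le> 1")
  case True
  then show ?thesis
    using assms key_inequality_small_angle by blast
next
  case False
  then have "1 \<le> t"
    by simp
  then show ?thesis
    using assms(2) by (rule key_inequality_large_angle)
qed

theorem lemma4p2:
  fixes \<theta>1 \<theta>2 :: real
  assumes "0 < \<theta>1" "\<theta>1 < pi / 2"
    and "0 < \<theta>2" "\<theta>2 < pi / 2"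
    and "\<theta>1 * cot \<theta>1 = pi * cot \<theta>2"
  shows "2 * \<theta>1 / sin \<theta>1 + 2 * cos \<theta>1 - pi > 2 * pi / sin \<theta>2 - 2 * pi"
proof -
  have "0 < sin \<theta>2"
    using assms(3,4) pi_bounds by (intro sin_gt_zero) auto
  have "2 * pi / sin \<theta>2 - 2 * pi = pi * (2 / sin \<theta>2 - 2)"
    by (simp add: right_diff_distrib)
  also have "\<dots> \<le> pi * cot \<theta>2 ^ 2"
    using two_csc_le_cot_square[of \<theta>2] \<open>0 < sin \<theta>2\<close> by (intro mult_left_mono) auto
  also have "\<dots> = (\<theta>1 * cot \<theta>1)^2 / pi"
    unfolding assms(5) by (simp add: power2_eq_square)
  also have "\<dots> < 2 * \<theta>1 / sin \<theta>1 + 2 * cos \<theta>1 - pi"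
    using key_inequality assms(1,2) by blast
  finally show ?thesis .
qed

end
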